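(* Let $A$ be an associative unital algebra over a field $k$ and $\delta$ a $k$-linear derivation of $A$ such that $\delta$ is locally nilpotent if $\mathrm{char}(k)=0$, and $\delta^p=0$ if $\mathrm{char}(k)=p>0$. Suppose $\delta(x)=1$ for some $x\in A$. Then $A$ is a self-projective left $A[z;\delta]$-module; equivalently, for every $\delta$-stable left ideal $I$ of $A$ and every $a\in A$ with $\delta(a)\in I$ there exists $y\in A^\delta$ with $a-y\in I$.
   Context: $A^\delta=\ker\delta$. $\delta$ locally nilpotent means every $a$ satisfies $\delta^n(a)=0$ for some $n>0$. $A[z;\delta]$ is the differential operator ring ($A[z]$ as left $A$-module, $za=az+\delta(a)$), acting on $A$ by $(\sum_i a_iz^i)\cdot x=\sum_ia_i\delta^i(x)$; its submodules of $A$ are the $\delta$-stable left ideals. A module $M$ is self-projective if for every submodule $N$, every homomorphism $M\to M/N$ lifts to an endomorphism of $M$. *)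

theory Defs
  imports Main
begin

text \<open>An associative unital k-algebra: the ring structure of A is the type class ring_1,
  and the k-structure is a scalar multiplication sm of the field k on A, making A a
  k-vector space such that multiplication of A is k-bilinear.\<close>
definition is_algebra :: "('k::field \<Rightarrow> 'a::ring_1 \<Rightarrow> 'a) \<Rightarrow> bool" where
  "is_algebra sm \<longleftrightarrow>
     (\<forall>c a b. sm c (a + b) = sm c a + sm c b) \<and>
     (\<forall>c d a. sm (c + d) a = sm c a + sm d a) \<and>
     (\<forall>c d a. sm (c * d) a = sm c (sm d a)) \<and>
     (\<forall>a. sm 1 a = a) \<and>
     (\<forall>c a b. sm c (a * b) = sm c a * b) \<and>
     (\<forall>c a b. sm c (a * b) = a * sm c b)"

definition is_k_derivation :: "('k::field \<Rightarrow> 'a::ring_1 \<Rightarrow> 'a) \<Rightarrow> ('a \<Rightarrow> 'a) \<Rightarrow> bool" where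
  "is_k_derivation sm \<delta> \<longleftrightarrow>
     (\<forall>a b. \<delta> (a + b) = \<delta> a + \<delta> b) \<and>
     (\<forall>c a. \<delta> (sm c a) = sm c (\<delta> a)) \<and>
     (\<forall>a b. \<delta> (a * b) = \<delta> a * b + a * \<delta> b)"

definition locally_nilpotent :: "('a::zero \<Rightarrow> 'a) \<Rightarrow> bool" where
  "locally_nilpotent \<delta> \<longleftrightarrow> (\<forall>a. \<exists>n>0. (\<delta> ^^ n) a = 0)"

definition left_ideal :: "'a::ring_1 set \<Rightarrow> bool" where
  "left_ideal I \<longleftrightarrow> 0 \<in> I \<and> (\<forall>a\<in>I. \<forall>b\<in>I. a + b \<in> I) \<and> (\<forall>r. \<forall>a\<in>I. r * a \<in> I)"

text \<open>The A[z;delta]-submodules of A are exactly the delta-stable left ideals.\<close>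
definition delta_stable_left_ideal :: "('a::ring_1 \<Rightarrow> 'a) \<Rightarrow> 'a set \<Rightarrow> bool" where
  "delta_stable_left_ideal \<delta> I \<longleftrightarrow> left_ideal I \<and> \<delta> ` I \<subseteq> I"

text \<open>Endomorphisms of A as a left A[z;delta]-module (A[z;delta] is generated by A and z,
  z acting as delta): additive, left A-linear maps commuting with delta.\<close>
definition Dmod_endo :: "('a::ring_1 \<Rightarrow> 'a) \<Rightarrow> ('a \<Rightarrow> 'a) \<Rightarrow> bool" where
  "Dmod_endo \<delta> g \<longleftrightarrow>
     (\<forall>a b. g (a + b) = g a + g b) \<and> (\<forall>r a. g (r * a) = r * g a) \<and> (\<forall>a. g (\<delta> a) = \<delta> (g a))"

text \<open>Homomorphisms A \<rightarrow> A/I of left A[z;delta]-modules, represented by a choice of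
  representatives f : A \<rightarrow> A (the homomorphism being a \<mapsto> f a + I).\<close>
definition Dmod_hom_to_quot :: "('a::ring_1 \<Rightarrow> 'a) \<Rightarrow> 'a set \<Rightarrow> ('a \<Rightarrow> 'a) \<Rightarrow> bool" where
  "Dmod_hom_to_quot \<delta> I f \<longleftrightarrow>
     (\<forall>a b. f (a + b) - (f a + f b) \<in> I) \<and> (\<forall>r a. f (r * a) - r * f a \<in> I) \<and>
     (\<forall>a. f (\<delta> a) - \<delta> (f a) \<in> I)"

definition self_projective_Dmod :: "('a::ring_1 \<Rightarrow> 'a) \<Rightarrow> bool" where
  "self_projective_Dmod \<delta> \<longleftrightarrow>
     (\<forall>I f. delta_stable_left_ideal \<delta> I \<and> Dmod_hom_to_quot \<delta> I f \<longrightarrow>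
        (\<exists>g. Dmod_endo \<delta> g \<and> (\<forall>a. g a - f a \<in> I)))"

end

theory Submission
  imports Defs
begin

(* Let I be a delta-stable left ideal and a an element with delta a in I.
   The truncated exponential series
       y = sum_{i=0..n} (-1)^i / i! * x^i * delta^i(a)
   is congruent to a modulo I (all terms with i >= 1 lie in I), and since delta x = 1
   its derivative telescopes to (-1)^n/n! * x^n * delta^(n+1)(a).  This vanishes as soon as
   delta^(n+1)(a) = 0 and 1, ..., n are invertible in k; the hypotheses on the characteristic
   provide such an n (any n in characteristic 0, n = p - 1 in characteristic p).
   Self-projectivity then follows from this "lifting of constants": a homomorphism
   f : A -> A/I is determined by f 1, whose derivative lies in I; lifting f 1 to a constant c,
   right multiplication by c is an endomorphism of A over A[z;delta] lifting f. *)

lemma derivation_add: "is_k_derivation sm d \<Longrightarrow> d (a + b) = d a + d b"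
  by (simp add: is_k_derivation_def)

lemma derivation_mult: "is_k_derivation sm d \<Longrightarrow> d (a * b) = d a * b + a * d b"
  by (simp add: is_k_derivation_def)

lemma derivation_scalar: "is_k_derivation sm d \<Longrightarrow> d (sm c a) = sm c (d a)"
  by (simp add: is_k_derivation_def)

lemma derivation_power:
  assumes der: "is_k_derivation sm d" and dx: "d x = 1"
  shows "d (x ^ Suc i) = of_nat (Suc i) * x ^ i"
proof (induction i)
  case 0
  then show ?case using dx by simp
next
  case (Suc i)
  have "d (x ^ Suc (Suc i)) = x ^ Suc i + x * (of_nat (Suc i) * x ^ i)"
    using derivation_mult[OF der, of x "x ^ Suc i"] Suc dx by simp
  also have "x * (of_nat (Suc i) * x ^ i) = of_nat (Suc i) * x ^ Suc i"
    by (metis mult.assoc mult_of_nat_commute power_Suc)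
  finally show ?case by (simp add: distrib_right)
qed

lemma scalar_zero_left: "is_algebra sm \<Longrightarrow> sm 0 v = 0"
  using is_algebra_def[of sm] by (metis add_cancel_right_right)

lemma scalar_zero_right: "is_algebra sm \<Longrightarrow> sm c 0 = 0"
  using is_algebra_def[of sm] by (metis add_cancel_right_right)

lemma scalar_of_nat: "is_algebra sm \<Longrightarrow> sm (of_nat n) v = of_nat n * v"
  by (induction n) (auto simp: scalar_zero_left is_algebra_def algebra_simps)

lemma left_ideal_uminus: "left_ideal I \<Longrightarrow> v \<in> I \<Longrightarrow> - v \<in> I"
  unfolding left_ideal_def by (metis mult_minus1)

lemma left_ideal_diff: "left_ideal I \<Longrightarrow> v \<in> I \<Longrightarrow> w \<in> I \<Longrightarrow> v - w \<in> I"
  using left_ideal_uminus[of I w] unfolding left_ideal_def by (metis diff_conv_add_uminus)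

lemma left_ideal_sum: "left_ideal I \<Longrightarrow> (\<And>i. i \<in> S \<Longrightarrow> f i \<in> I) \<Longrightarrow> sum f S \<in> I"
  by (induction S rule: infinite_finite_induct) (auto simp: left_ideal_def)

lemma stable_ideal_iterates:
  assumes "delta_stable_left_ideal d I" and "d a \<in> I"
  shows "(d ^^ Suc i) a \<in> I"
  using assms by (induction i) (auto simp: delta_stable_left_ideal_def)

fun exp_coeff :: "nat \<Rightarrow> 'k::field" where
  "exp_coeff 0 = 1"
| "exp_coeff (Suc i) = - exp_coeff i / of_nat (Suc i)"

definition constant_part ::
    "('k::field \<Rightarrow> 'a::ring_1 \<Rightarrow> 'a) \<Rightarrow> ('a \<Rightarrow> 'a) \<Rightarrow> 'a \<Rightarrow> nat \<Rightarrow> 'a \<Rightarrow> 'a" where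
  "constant_part sm d x n a = (\<Sum>i<Suc n. sm (exp_coeff i) (x ^ i * (d ^^ i) a))"

text \<open>Derivative of the term of index m+1: its first part cancels the leading part of
  the derivative of the previous terms.\<close>
lemma derivative_series_term:
  fixes sm :: "'k::field \<Rightarrow> 'a::ring_1 \<Rightarrow> 'a"
  assumes alg: "is_algebra sm" and der: "is_k_derivation sm d" and dx: "d x = 1"
    and nz: "of_nat (Suc m) \<noteq> (0::'k)"
  shows "d (sm (exp_coeff (Suc m)) (x ^ Suc m * (d ^^ Suc m) a))
       = sm (- exp_coeff m :: 'k) (x ^ m * (d ^^ Suc m) a)
         + sm (exp_coeff (Suc m)) (x ^ Suc m * (d ^^ Suc (Suc m)) a)"
proof -
  let ?v = "x ^ m * (d ^^ Suc m) a"
  have product_rule: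
    "d (x ^ Suc m * (d ^^ Suc m) a) = of_nat (Suc m) * ?v + x ^ Suc m * (d ^^ Suc (Suc m)) a"
    using derivation_mult[OF der, of "x ^ Suc m" "(d ^^ Suc m) a"] derivation_power[OF der dx, of m]
    by (simp add: mult.assoc)
  have "d (sm (exp_coeff (Suc m)) (x ^ Suc m * (d ^^ Suc m) a))
      = sm (exp_coeff (Suc m)) (of_nat (Suc m) * ?v)
        + sm (exp_coeff (Suc m)) (x ^ Suc m * (d ^^ Suc (Suc m)) a)"
    unfolding derivation_scalar[OF der] product_rule using alg by (simp add: is_algebra_def)
  also have "sm (exp_coeff (Suc m)) (of_nat (Suc m) * ?v) = sm (exp_coeff (Suc m) * of_nat (Suc m)) ?v"
    using alg unfolding is_algebra_def by (simp only: scalar_of_nat[OF alg, symmetric])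
  also have "exp_coeff (Suc m) * of_nat (Suc m) = - (exp_coeff m :: 'k)"
    using nz by simp
  finally show ?thesis .
qed

text \<open>The derivative of the constant part telescopes to its last correction term.\<close>
lemma derivative_constant_part:
  fixes sm :: "'k::field \<Rightarrow> 'a::ring_1 \<Rightarrow> 'a"
  assumes alg: "is_algebra sm" and der: "is_k_derivation sm d" and dx: "d x = 1"
    and nz: "\<forall>j\<in>{1..n}. of_nat j \<noteq> (0::'k)"
  shows "d (constant_part sm d x n a) = sm (exp_coeff n :: 'k) (x ^ n * (d ^^ Suc n) a)"
  using nz
proof (induction n)
  case 0
  then show ?case using alg by (simp add: constant_part_def is_algebra_def)
next
  case (Suc m)
  let ?v = "x ^ m * (d ^^ Suc m) a"
  have cancel: "sm (exp_coeff m) ?v + sm (- exp_coeff m :: 'k) ?v = 0"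
    using alg by (metis is_algebra_def right_minus scalar_zero_left)
  have ih: "d (constant_part sm d x m a) = sm (exp_coeff m) ?v"
    using Suc by simp
  have step: "d (sm (exp_coeff (Suc m)) (x ^ Suc m * (d ^^ Suc m) a))
      = sm (- exp_coeff m :: 'k) ?v + sm (exp_coeff (Suc m)) (x ^ Suc m * (d ^^ Suc (Suc m)) a)"
    using Suc.prems by (intro derivative_series_term[OF alg der dx]) (auto simp del: of_nat_Suc)
  have "d (constant_part sm d x (Suc m) a)
      = d (constant_part sm d x m a) + d (sm (exp_coeff (Suc m)) (x ^ Suc m * (d ^^ Suc m) a))"
    unfolding constant_part_def by (simp only: sum.lessThan_Suc derivation_add[OF der])
  also have "\<dots> = (sm (exp_coeff m) ?v + sm (- exp_coeff m :: 'k) ?v)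
                  + sm (exp_coeff (Suc m)) (x ^ Suc m * (d ^^ Suc (Suc m)) a)"
    by (simp only: ih step add.assoc)
  finally show ?case using cancel by simp
qed

text \<open>Modulo a stable ideal containing d a, all correction terms vanish.\<close>
lemma constant_part_congruent:
  assumes alg: "is_algebra sm" and I: "delta_stable_left_ideal d I" and da: "d a \<in> I"
  shows "a - constant_part sm d x n a \<in> I"
proof -
  have li: "left_ideal I" using I by (simp add: delta_stable_left_ideal_def)
  have split: "constant_part sm d x n a
      = a + (\<Sum>i<n. sm (exp_coeff (Suc i)) (x ^ Suc i * (d ^^ Suc i) a))"
    unfolding constant_part_def sum.lessThan_Suc_shift using alg by (simp add: is_algebra_def)
  have "(\<Sum>i<n. sm (exp_coeff (Suc i)) (x ^ Suc i * (d ^^ Suc i) a)) \<in> I"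
    using li stable_ideal_iterates[OF I da] alg
    by (intro left_ideal_sum) (auto simp: is_algebra_def left_ideal_def)
  then show ?thesis using split left_ideal_uminus[OF li] by (simp add: diff_add_eq_diff_diff_swap)
qed

lemma of_nat_nonzero_below_char:
  assumes "0 < j" and "CHAR('k::field) = 0 \<or> j < CHAR('k)"
  shows "of_nat j \<noteq> (0::'k)"
  using assms by (auto simp: of_nat_eq_0_iff_char_dvd dest: dvd_imp_le)

lemma constants_lift:
  fixes sm :: "'k::field \<Rightarrow> 'a::ring_1 \<Rightarrow> 'a"
  assumes alg: "is_algebra sm" and der: "is_k_derivation sm d" and dx: "d x = 1"
    and nilp: "(d ^^ Suc n) a = 0" and nz: "\<forall>j\<in>{1..n}. of_nat j \<noteq> (0::'k)"
    and I: "delta_stable_left_ideal d I" and da: "d a \<in> I"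
  shows "\<exists>y. d y = 0 \<and> a - y \<in> I"
proof (intro exI conjI)
  show "d (constant_part sm d x n a) = 0"
    using derivative_constant_part[OF alg der dx nz] nilp alg by (simp add: scalar_zero_right)
  show "a - constant_part sm d x n a \<in> I"
    using constant_part_congruent[OF alg I da] .
qed

lemma nilpotency_below_char:
  fixes d :: "'a::zero \<Rightarrow> 'a"
  assumes "CHAR('k::field) = 0 \<Longrightarrow> locally_nilpotent d"
    and "CHAR('k) > 0 \<Longrightarrow> d ^^ CHAR('k) = (\<lambda>_. 0)"
  obtains n where "(d ^^ Suc n) a = 0" and "\<forall>j\<in>{1..n}. of_nat j \<noteq> (0::'k)"
proof (cases "CHAR('k) = 0")
  case True
  then obtain m where "m > 0" "(d ^^ m) a = 0"
    using assms(1) unfolding locally_nilpotent_def by blast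
  then show ?thesis
    using that[of "m - 1"] True of_nat_nonzero_below_char[where 'k='k] by simp
next
  case False
  have "\<forall>j\<in>{1..CHAR('k) - 1}. of_nat j \<noteq> (0::'k)"
    using of_nat_nonzero_below_char[where 'k='k] by force
  then show ?thesis
    using that[of "CHAR('k) - 1"] assms(2) False by simp
qed

text \<open>Self-projectivity reduces to lifting of constants: a homomorphism f : A \<rightarrow> A/I is
  lifted by right multiplication with a constant congruent to f 1.\<close>
lemma self_projective_if_constants_lift:
  fixes d :: "'a::ring_1 \<Rightarrow> 'a"
  assumes add: "\<And>a b. d (a + b) = d a + d b" and leibniz: "\<And>a b. d (a * b) = d a * b + a * d b"
    and lift: "\<And>I a. delta_stable_left_ideal d I \<Longrightarrow> d a \<in> I \<Longrightarrow> \<exists>y. d y = 0 \<and> a - y \<in> I"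
  shows "self_projective_Dmod d"
  unfolding self_projective_Dmod_def
proof (intro allI impI)
  fix I f
  assume h: "delta_stable_left_ideal d I \<and> Dmod_hom_to_quot d I f"
  have li: "left_ideal I" using h by (simp add: delta_stable_left_ideal_def)
  have "f (0 + 0) - (f 0 + f 0) \<in> I" using h unfolding Dmod_hom_to_quot_def by blast
  then have f0: "f 0 \<in> I" using left_ideal_uminus[OF li, of "- f 0"] by simp
  have "d 1 = 0" using leibniz[of 1 1] by simp
  moreover have "f (d 1) - d (f 1) \<in> I" using h unfolding Dmod_hom_to_quot_def by blast
  ultimately have "d (f 1) \<in> I" using left_ideal_diff[OF li f0, of "f 0 - d (f 1)"] by simp
  then obtain c where c: "d c = 0" "f 1 - c \<in> I" using lift h by blast
  have "Dmod_endo d (\<lambda>a. a * c)"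
    unfolding Dmod_endo_def using leibniz add c(1) by (simp add: distrib_right mult.assoc)
  moreover have "a * c - f a \<in> I" for a
  proof -
    have "a * (f 1 - c) \<in> I" using c(2) li unfolding left_ideal_def by auto
    moreover have "f (a * 1) - a * f 1 \<in> I" using h unfolding Dmod_hom_to_quot_def by blast
    ultimately have "a * (f 1 - c) + (f (a * 1) - a * f 1) \<in> I"
      using li unfolding left_ideal_def by blast
    then have "f a - a * c \<in> I" by (simp add: algebra_simps)
    then show ?thesis using left_ideal_uminus[OF li] by fastforce
  qed
  ultimately show "\<exists>g. Dmod_endo d g \<and> (\<forall>a. g a - f a \<in> I)" by blast
qed

theorem proposition3p10:
  fixes sm :: "'k::field \<Rightarrow> 'a::ring_1 \<Rightarrow> 'a"
    and \<delta> :: "'a \<Rightarrow> 'a"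
    and x :: 'a
  assumes "is_algebra sm"
    and "is_k_derivation sm \<delta>"
    and "CHAR('k) = 0 \<Longrightarrow> locally_nilpotent \<delta>"
    and "CHAR('k) > 0 \<Longrightarrow> \<delta> ^^ CHAR('k) = (\<lambda>_. 0)"
    and "\<delta> x = 1"
  shows "self_projective_Dmod \<delta> \<and>
         (\<forall>I a. delta_stable_left_ideal \<delta> I \<and> \<delta> a \<in> I \<longrightarrow>
            (\<exists>y. \<delta> y = 0 \<and> a - y \<in> I))"
proof -
  have lift: "\<exists>y. \<delta> y = 0 \<and> a - y \<in> I"
    if "delta_stable_left_ideal \<delta> I" and "\<delta> a \<in> I" for I a
  proof -
    obtain n where "(\<delta> ^^ Suc n) a = 0" and "\<forall>j\<in>{1..n}. of_nat j \<noteq> (0::'k)"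
      using nilpotency_below_char[OF assms(3,4)] by blast
    then show ?thesis using constants_lift[OF assms(1,2,5)] that by blast
  qed
  have "self_projective_Dmod \<delta>"
    using self_projective_if_constants_lift[of \<delta>] derivation_add[OF assms(2)]
      derivation_mult[OF assms(2)] lift by blast
  then show ?thesis using lift by blast
qed

end
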